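(* Let $\Gamma$ be a connected $\mathbb Z$-leg-weighted graph. Then all but finitely many weightings $w\in W(\Gamma)$ admit a positive cycle, i.e. a cycle $\gamma$ in $\Gamma$ such that $w(e)>0$ for every directed edge $e\in\gamma$ (where $w(e)$ is the value of $w$ on the half-edge of $e$ at its source).
   Context: A graph consists of finite sets $V$ (vertices) and $H$ (half-edges), a map $\mathrm{end}\colon H\to V$, an involution $i$ of $H$, a genus $g\colon V\to\mathbb Z_{\ge0}$ and an integer twist $k$. Legs are fixed points of $i$; a directed edge is a non-leg half-edge $h$, with source $\mathrm{end}(h)$ and target $\mathrm{end}(i(h))$. $\mathrm{val}(v)$ is the number of non-leg half-edges at $v$, $\kappa(v)=2g(v)-2+\mathrm{val}(v)$, $g(\Gamma)=b_1(\Gamma)+\sum_vg(v)$. A cycle is a closed walk of directed edges (target of each equals source of the next, returning to the start) repeating no vertex or undirected edge. A weighting is $w\colon H\to\mathbb Z$ with $w(h)+w(i(h))=0$ for $h\neq i(h)$ and $\sum_{\mathrm{end}(h)=v}w(h)+k\kappa(v)=0$ for all vertices $v$. A leg-weighted graph has given integer leg values summing to $-k(2g(\Gamma)-2)$, and $W(\Gamma)$ is the set of weightings with these leg values. *)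

theory Defs
  imports Main
begin

text \<open>A graph: vertex set V, half-edge set H, map endf : H -> V, involution ii of H,
  genus function gen : V -> nat. The twist k is an integer parameter.\<close>

definition is_graph :: "'v set \<Rightarrow> 'h set \<Rightarrow> ('h \<Rightarrow> 'v) \<Rightarrow> ('h \<Rightarrow> 'h) \<Rightarrow> bool" where
  "is_graph V H endf ii \<longleftrightarrow> finite V \<and> finite H \<and> endf ` H \<subseteq> V \<and>
     ii ` H \<subseteq> H \<and> (\<forall>h\<in>H. ii (ii h) = h)"

definition is_leg :: "('h \<Rightarrow> 'h) \<Rightarrow> 'h \<Rightarrow> bool" where
  "is_leg ii h \<longleftrightarrow> ii h = h"

text \<open>Non-leg half-edges = directed edges.\<close>
definition dedges :: "'h set \<Rightarrow> ('h \<Rightarrow> 'h) \<Rightarrow> 'h set" where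
  "dedges H ii = {h\<in>H. ii h \<noteq> h}"

definition source :: "('h \<Rightarrow> 'v) \<Rightarrow> 'h \<Rightarrow> 'v" where
  "source endf h = endf h"

definition target :: "('h \<Rightarrow> 'v) \<Rightarrow> ('h \<Rightarrow> 'h) \<Rightarrow> 'h \<Rightarrow> 'v" where
  "target endf ii h = endf (ii h)"

definition val :: "'h set \<Rightarrow> ('h \<Rightarrow> 'v) \<Rightarrow> ('h \<Rightarrow> 'h) \<Rightarrow> 'v \<Rightarrow> nat" where
  "val H endf ii v = card {h\<in>dedges H ii. endf h = v}"

definition kappa :: "'h set \<Rightarrow> ('h \<Rightarrow> 'v) \<Rightarrow> ('h \<Rightarrow> 'h) \<Rightarrow> ('v \<Rightarrow> nat) \<Rightarrow> 'v \<Rightarrow> int" where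
  "kappa H endf ii gen v = 2 * int (gen v) - 2 + int (val H endf ii v)"

definition adj :: "'h set \<Rightarrow> ('h \<Rightarrow> 'v) \<Rightarrow> ('h \<Rightarrow> 'h) \<Rightarrow> ('v \<times> 'v) set" where
  "adj H endf ii = {(endf h, endf (ii h)) | h. h \<in> dedges H ii}"

definition connected_graph :: "'v set \<Rightarrow> 'h set \<Rightarrow> ('h \<Rightarrow> 'v) \<Rightarrow> ('h \<Rightarrow> 'h) \<Rightarrow> bool" where
  "connected_graph V H endf ii \<longleftrightarrow> (\<forall>u\<in>V. \<forall>v\<in>V. (u, v) \<in> (adj H endf ii)\<^sup>*)"

definition num_components :: "'v set \<Rightarrow> 'h set \<Rightarrow> ('h \<Rightarrow> 'v) \<Rightarrow> ('h \<Rightarrow> 'h) \<Rightarrow> nat" where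
  "num_components V H endf ii = card (V // Restr ((adj H endf ii)\<^sup>*) V)"

definition num_edges :: "'h set \<Rightarrow> ('h \<Rightarrow> 'h) \<Rightarrow> nat" where
  "num_edges H ii = card {{h, ii h} | h. h \<in> dedges H ii}"

definition betti1 :: "'v set \<Rightarrow> 'h set \<Rightarrow> ('h \<Rightarrow> 'v) \<Rightarrow> ('h \<Rightarrow> 'h) \<Rightarrow> int" where
  "betti1 V H endf ii = int (num_edges H ii) - int (card V) + int (num_components V H endf ii)"

definition graph_genus :: "'v set \<Rightarrow> 'h set \<Rightarrow> ('h \<Rightarrow> 'v) \<Rightarrow> ('h \<Rightarrow> 'h) \<Rightarrow> ('v \<Rightarrow> nat) \<Rightarrow> int" where
  "graph_genus V H endf ii gen = betti1 V H endf ii + (\<Sum>v\<in>V. int (gen v))"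

text \<open>Weightings (with twist k). Functions are required to vanish outside H, so that
  a weighting is determined by its values on H.\<close>
definition is_weighting :: "'v set \<Rightarrow> 'h set \<Rightarrow> ('h \<Rightarrow> 'v) \<Rightarrow> ('h \<Rightarrow> 'h) \<Rightarrow> ('v \<Rightarrow> nat) \<Rightarrow> int
    \<Rightarrow> ('h \<Rightarrow> int) \<Rightarrow> bool" where
  "is_weighting V H endf ii gen k w \<longleftrightarrow>
     (\<forall>h. h \<notin> H \<longrightarrow> w h = 0) \<and>
     (\<forall>h\<in>dedges H ii. w h + w (ii h) = 0) \<and>
     (\<forall>v\<in>V. (\<Sum>h\<in>{h\<in>H. endf h = v}. w h) + k * kappa H endf ii gen v = 0)"

definition leg_weighted :: "'v set \<Rightarrow> 'h set \<Rightarrow> ('h \<Rightarrow> 'v) \<Rightarrow> ('h \<Rightarrow> 'h) \<Rightarrow> ('v \<Rightarrow> nat) \<Rightarrow> int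
    \<Rightarrow> ('h \<Rightarrow> int) \<Rightarrow> bool" where
  "leg_weighted V H endf ii gen k lv \<longleftrightarrow>
     (\<Sum>h\<in>{h\<in>H. is_leg ii h}. lv h) = - k * (2 * graph_genus V H endf ii gen - 2)"

definition weightings :: "'v set \<Rightarrow> 'h set \<Rightarrow> ('h \<Rightarrow> 'v) \<Rightarrow> ('h \<Rightarrow> 'h) \<Rightarrow> ('v \<Rightarrow> nat) \<Rightarrow> int
    \<Rightarrow> ('h \<Rightarrow> int) \<Rightarrow> ('h \<Rightarrow> int) set" where
  "weightings V H endf ii gen k lv =
     {w. is_weighting V H endf ii gen k w \<and> (\<forall>h\<in>H. is_leg ii h \<longrightarrow> w h = lv h)}"

definition is_cycle :: "'h set \<Rightarrow> ('h \<Rightarrow> 'v) \<Rightarrow> ('h \<Rightarrow> 'h) \<Rightarrow> 'h list \<Rightarrow> bool" where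
  "is_cycle H endf ii c \<longleftrightarrow> c \<noteq> [] \<and> set c \<subseteq> dedges H ii \<and>
     (\<forall>j<length c. target endf ii (c ! j) = source endf (c ! ((j + 1) mod length c))) \<and>
     distinct (map (source endf) c) \<and>
     distinct (map (\<lambda>h. {h, ii h}) c)"

definition positive_cycle :: "'h set \<Rightarrow> ('h \<Rightarrow> 'v) \<Rightarrow> ('h \<Rightarrow> 'h) \<Rightarrow> ('h \<Rightarrow> int) \<Rightarrow> 'h list \<Rightarrow> bool" where
  "positive_cycle H endf ii w c \<longleftrightarrow> is_cycle H endf ii c \<and> (\<forall>h\<in>set c. w h > 0)"

end

theory Submission
  imports Defs
begin

text \<open>If $w$ has no positive cycle, the relation ``$u \to v$ along a positive edge'' is acyclic.
  Given a positive edge $h$ from $u$ to $v$, let $S$ be the set of vertices reachable from $v$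
  along positive edges; then $u \notin S$.  Summing the vertex conditions over $S$, the edges
  inside $S$ cancel in pairs, every other edge leaving $S$ has non-positive weight, and $i(h)$
  leaves $S$ with weight $-w(h)$.  Hence $w(h)$ is bounded by the leg values and the twist
  terms $k\kappa(x)$ alone, so all weightings without a positive cycle take values in a fixed
  finite range.\<close>

definition positive_adj :: "'h set \<Rightarrow> ('h \<Rightarrow> 'v) \<Rightarrow> ('h \<Rightarrow> 'h) \<Rightarrow> ('h \<Rightarrow> int) \<Rightarrow> ('v \<times> 'v) set" where
  "positive_adj H endf ii w = {(endf g, endf (ii g)) | g. g \<in> dedges H ii \<and> w g > 0}"

definition closed_walk :: "'h set \<Rightarrow> ('h \<Rightarrow> 'v) \<Rightarrow> ('h \<Rightarrow> 'h) \<Rightarrow> 'h list \<Rightarrow> bool" where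
  "closed_walk H endf ii c \<longleftrightarrow> c \<noteq> [] \<and> set c \<subseteq> dedges H ii \<and>
     (\<forall>j<length c. endf (ii (c ! j)) = endf (c ! ((j + 1) mod length c)))"

abbreviation antisymmetric_on_edges :: "'h set \<Rightarrow> ('h \<Rightarrow> 'h) \<Rightarrow> ('h \<Rightarrow> int) \<Rightarrow> bool" where
  "antisymmetric_on_edges H ii w \<equiv> \<forall>g\<in>dedges H ii. w g + w (ii g) = 0"

lemma trancl_positive_adj_imp_walk:
  assumes "(a, b) \<in> (positive_adj H endf ii w)\<^sup>+"
  shows "\<exists>c. c \<noteq> [] \<and> (\<forall>g\<in>set c. g \<in> dedges H ii \<and> w g > 0) \<and> endf (hd c) = a
     \<and> endf (ii (last c)) = b \<and> (\<forall>j. Suc j < length c \<longrightarrow> endf (ii (c ! j)) = endf (c ! Suc j))"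
  using assms
proof (induction rule: converse_trancl_induct)
  case (base y)
  then obtain g where "y = endf g" "b = endf (ii g)" "g \<in> dedges H ii" "w g > 0"
    unfolding positive_adj_def by blast
  then show ?case by (intro exI[of _ "[g]"]) auto
next
  case (step y z)
  then obtain g where g: "y = endf g" "z = endf (ii g)" "g \<in> dedges H ii" "w g > 0"
    unfolding positive_adj_def by blast
  from step.IH obtain c where c: "c \<noteq> []" "\<forall>g\<in>set c. g \<in> dedges H ii \<and> w g > 0"
    "endf (hd c) = z" "endf (ii (last c)) = b"
    "\<forall>j. Suc j < length c \<longrightarrow> endf (ii (c ! j)) = endf (c ! Suc j)" by blast
  have "\<forall>j. Suc j < length (g # c) \<longrightarrow> endf (ii ((g # c) ! j)) = endf ((g # c) ! Suc j)"
    using g c by (auto simp: hd_conv_nth nth_Cons split: nat.split)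
  then show ?case using g c by (intro exI[of _ "g # c"]) auto
qed

lemma trancl_positive_adj_loop_imp_closed_walk:
  assumes "(x, x) \<in> (positive_adj H endf ii w)\<^sup>+"
  shows "\<exists>c. closed_walk H endf ii c \<and> (\<forall>g\<in>set c. w g > 0)"
proof -
  obtain c where c: "c \<noteq> []" "\<forall>g\<in>set c. g \<in> dedges H ii \<and> w g > 0"
    "endf (hd c) = x" "endf (ii (last c)) = x"
    "\<forall>j. Suc j < length c \<longrightarrow> endf (ii (c ! j)) = endf (c ! Suc j)"
    using trancl_positive_adj_imp_walk[OF assms] by blast
  have "endf (ii (c ! j)) = endf (c ! ((j + 1) mod length c))" if j: "j < length c" for j
  proof (cases "Suc j < length c")
    case True
    then show ?thesis using c by simp
  next
    case False
    then have "Suc j = length c" using j by simp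
    then have "j = length c - 1" "(j + 1) mod length c = 0" by simp_all
    then show ?thesis using c by (simp add: hd_conv_nth last_conv_nth)
  qed
  then show ?thesis using c unfolding closed_walk_def by blast
qed

lemma closed_walk_shortcut:
  assumes c: "closed_walk H endf ii c"
    and ij: "i < j" "j < length c" "endf (c ! i) = endf (c ! j)"
  shows "closed_walk H endf ii (take (j - i) (drop i c))"
proof -
  define c' where "c' = take (j - i) (drop i c)"
  have len: "length c' = j - i" and nth: "\<And>m. m < j - i \<Longrightarrow> c' ! m = c ! (i + m)"
    using ij unfolding c'_def by auto
  have "endf (ii (c' ! m)) = endf (c' ! ((m + 1) mod length c'))" if m: "m < length c'" for m
  proof -
    have "i + m + 1 < length c" using m len ij by simp
    then have step: "endf (ii (c' ! m)) = endf (c ! (i + m + 1))"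
      using c m len nth unfolding closed_walk_def by (metis add_lessD1 mod_less)
    show ?thesis
    proof (cases "m + 1 < j - i")
      case True
      then show ?thesis using step len nth by (simp add: add.assoc)
    next
      case False
      then have "m + 1 = j - i" using m len by simp
      then have "i + m + 1 = j" "(m + 1) mod length c' = 0" using len ij by simp_all
      then show ?thesis using step nth ij by simp
    qed
  qed
  moreover have "set c' \<subseteq> set c" unfolding c'_def by (meson in_set_dropD in_set_takeD subsetI)
  moreover have "c' \<noteq> []" using len ij by auto
  ultimately show ?thesis using c unfolding closed_walk_def c'_def[symmetric] by blast
qed

lemma distinct_edge_pairs_if_positive:
  assumes w: "antisymmetric_on_edges H ii w"
    and c: "set c \<subseteq> dedges H ii" "\<forall>g\<in>set c. w g > 0"
    and dist: "distinct (map endf c)"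
  shows "distinct (map (\<lambda>h. {h, ii h}) c)"
proof (rule distinct_map[THEN iffD2], intro conjI inj_onI)
  show "distinct c" using dist by (simp add: distinct_map)
  fix g g' assume g: "g \<in> set c" "g' \<in> set c" and eq: "{g, ii g} = {g', ii g'}"
  show "g = g'"
  proof (rule ccontr)
    assume "g \<noteq> g'"
    with eq have "g = ii g'" by (auto simp: doubleton_eq_iff)
    moreover have "w g' + w (ii g') = 0" using w c(1) g(2) by blast
    moreover have "w g > 0" "w g' > 0" using c(2) g by auto
    ultimately show False by simp
  qed
qed

lemma positive_closed_walk_imp_positive_cycle:
  assumes w: "antisymmetric_on_edges H ii w"
  shows "closed_walk H endf ii c \<Longrightarrow> \<forall>g\<in>set c. w g > 0 \<Longrightarrow> \<exists>c'. positive_cycle H endf ii w c'"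
proof (induction c rule: length_induct)
  case (1 c)
  show ?case
  proof (cases "distinct (map endf c)")
    case True
    then have "positive_cycle H endf ii w c"
      using 1 distinct_edge_pairs_if_positive[OF w]
      unfolding positive_cycle_def is_cycle_def closed_walk_def source_def target_def by auto
    then show ?thesis by blast
  next
    case False
    then obtain i j where ij: "i < j" "j < length c" "endf (c ! i) = endf (c ! j)"
      unfolding distinct_conv_nth by (auto simp: nat_neq_iff)
    have "set (take (j - i) (drop i c)) \<subseteq> set c"
      by (meson in_set_dropD in_set_takeD subsetI)
    moreover have "length (take (j - i) (drop i c)) < length c" using ij by simp
    ultimately show ?thesis
      using "1.IH" "1.prems"(2) closed_walk_shortcut[OF "1.prems"(1) ij] by blast
  qed
qed

lemma no_positive_cycle_imp_acyclic:
  assumes "antisymmetric_on_edges H ii w" and "\<not> (\<exists>c. positive_cycle H endf ii w c)"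
  shows "(x, x) \<notin> (positive_adj H endf ii w)\<^sup>+"
  using assms trancl_positive_adj_loop_imp_closed_walk positive_closed_walk_imp_positive_cycle
  by metis

definition leg_and_twist_bound ::
    "'v set \<Rightarrow> 'h set \<Rightarrow> ('h \<Rightarrow> 'v) \<Rightarrow> ('h \<Rightarrow> 'h) \<Rightarrow> ('v \<Rightarrow> nat) \<Rightarrow> int \<Rightarrow> ('h \<Rightarrow> int) \<Rightarrow> int" where
  "leg_and_twist_bound V H endf ii gen k lv =
     (\<Sum>g\<in>{g\<in>H. is_leg ii g}. \<bar>lv g\<bar>) + (\<Sum>x\<in>V. \<bar>k * kappa H endf ii gen x\<bar>)"

lemma leg_and_twist_bound_nonneg: "leg_and_twist_bound V H endf ii gen k lv \<ge> 0"
  unfolding leg_and_twist_bound_def by (simp add: sum_nonneg)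

lemma weighting_sum_over_vertex_set:
  assumes G: "is_graph V H endf ii" and W: "is_weighting V H endf ii gen k w" and S: "S \<subseteq> V"
  shows "(\<Sum>g\<in>{g\<in>H. endf g \<in> S}. w g) = - (\<Sum>x\<in>S. k * kappa H endf ii gen x)"
proof -
  have fH: "finite H" and fS: "finite S" using G S finite_subset unfolding is_graph_def by auto
  have "(\<Sum>g\<in>{g\<in>H. endf g \<in> S}. w g) = (\<Sum>x\<in>S. \<Sum>g\<in>{g\<in>{g\<in>H. endf g \<in> S}. endf g = x}. w g)"
    by (rule sum.group[symmetric]) (use fH fS in auto)
  also have "\<dots> = (\<Sum>x\<in>S. \<Sum>g\<in>{g\<in>H. endf g = x}. w g)"
    by (intro sum.cong refl arg_cong[where f="sum w"]) auto
  also have "\<dots> = (\<Sum>x\<in>S. - (k * kappa H endf ii gen x))"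
    using W S unfolding is_weighting_def by (intro sum.cong) (auto simp: add_eq_0_iff2)
  finally show ?thesis by (simp add: sum_negf)
qed

lemma weighting_sum_internal_edges:
  assumes G: "is_graph V H endf ii" and W: "is_weighting V H endf ii gen k w"
  shows "(\<Sum>g\<in>{g\<in>dedges H ii. endf g \<in> S \<and> endf (ii g) \<in> S}. w g) = 0"
    (is "sum w ?E = 0")
proof -
  have inv: "\<And>g. g \<in> H \<Longrightarrow> ii (ii g) = g \<and> ii g \<in> H" using G unfolding is_graph_def by auto
  have "sum w ?E = (\<Sum>g\<in>?E. - w g)"
    using W inv unfolding is_weighting_def dedges_def
    by (intro sum.reindex_bij_witness[where i=ii and j=ii]) (auto simp: add_eq_0_iff2)
  then show ?thesis by (simp add: sum_negf)
qed

lemma weighting_le_bound_at_cut: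
  assumes G: "is_graph V H endf ii"
    and W: "is_weighting V H endf ii gen k w"
    and L: "\<forall>h\<in>H. is_leg ii h \<longrightarrow> w h = lv h"
    and S: "S \<subseteq> V"
    and closed: "\<And>g. g \<in> dedges H ii \<Longrightarrow> endf g \<in> S \<Longrightarrow> endf (ii g) \<notin> S \<Longrightarrow> w g \<le> 0"
    and h: "h \<in> dedges H ii" "endf h \<notin> S" "endf (ii h) \<in> S"
  shows "w h \<le> leg_and_twist_bound V H endf ii gen k lv"
proof -
  have fV: "finite V" and fH: "finite H" and inv: "\<And>g. g \<in> H \<Longrightarrow> ii (ii g) = g \<and> ii g \<in> H"
    using G unfolding is_graph_def by auto
  define T where "T = {g\<in>H. endf g \<in> S}"
  define TL where "TL = {g\<in>T. is_leg ii g}"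
  define TI where "TI = {g\<in>dedges H ii. endf g \<in> S \<and> endf (ii g) \<in> S}"
  define TC where "TC = {g\<in>dedges H ii. endf g \<in> S \<and> endf (ii g) \<notin> S}"
  have T: "T = TL \<union> TI \<union> TC" unfolding T_def TL_def TI_def TC_def dedges_def is_leg_def by auto
  moreover have "finite TL" "finite TI" "finite TC"
    using fH unfolding TL_def TI_def TC_def T_def dedges_def by auto
  moreover have "TL \<inter> TI = {}" "(TL \<union> TI) \<inter> TC = {}"
    unfolding TL_def TI_def TC_def dedges_def is_leg_def by auto
  ultimately have split: "sum w T = sum w TL + sum w TI + sum w TC"
    unfolding T by (simp add: sum.union_disjoint)
  have iih: "ii h \<in> TC" and wih: "w (ii h) = - w h"
    using h inv W unfolding TC_def dedges_def is_weighting_def by (auto simp: add_eq_0_iff2)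
  have "sum w TC = w (ii h) + sum w (TC - {ii h})"
    using sum.remove[OF \<open>finite TC\<close> iih] .
  moreover have "sum w (TC - {ii h}) \<le> 0"
    using closed unfolding TC_def by (intro sum_nonpos) auto
  ultimately have TC: "sum w TC \<le> - w h" using wih by simp
  have "sum w TL = sum lv TL" using L unfolding TL_def T_def by simp
  also have "\<dots> \<le> (\<Sum>g\<in>{g\<in>H. is_leg ii g}. \<bar>lv g\<bar>)"
    using fH by (intro order.trans[OF sum_mono sum_mono2]) (auto simp: TL_def T_def)
  finally have TL: "sum w TL \<le> (\<Sum>g\<in>{g\<in>H. is_leg ii g}. \<bar>lv g\<bar>)" .
  have "(\<Sum>x\<in>S. k * kappa H endf ii gen x) \<le> (\<Sum>x\<in>V. \<bar>k * kappa H endf ii gen x\<bar>)"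
    using fV S by (intro order.trans[OF sum_mono sum_mono2]) auto
  then show ?thesis
    using weighting_sum_over_vertex_set[OF G W S] weighting_sum_internal_edges[OF G W, of S]
      split TC TL unfolding T_def TI_def leg_and_twist_bound_def by linarith
qed

lemma positive_weight_le_bound:
  assumes G: "is_graph V H endf ii"
    and W: "is_weighting V H endf ii gen k w"
    and L: "\<forall>h\<in>H. is_leg ii h \<longrightarrow> w h = lv h"
    and noc: "\<not> (\<exists>c. positive_cycle H endf ii w c)"
    and h: "h \<in> dedges H ii" "w h > 0"
  shows "w h \<le> leg_and_twist_bound V H endf ii gen k lv"
proof -
  define P where "P = positive_adj H endf ii w"
  define S where "S = {x\<in>V. (endf (ii h), x) \<in> P\<^sup>*}"
  have w: "antisymmetric_on_edges H ii w" using W unfolding is_weighting_def by blast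
  have inV: "endf g \<in> V" "endf (ii g) \<in> V" if "g \<in> dedges H ii" for g
    using G that unfolding is_graph_def dedges_def by auto
  have hP: "(endf h, endf (ii h)) \<in> P" unfolding P_def positive_adj_def using h by blast
  have "endf h \<notin> S"
  proof
    assume "endf h \<in> S"
    then have "(endf (ii h), endf h) \<in> P\<^sup>*" unfolding S_def by blast
    with hP have "(endf h, endf h) \<in> P\<^sup>+" by (rule rtrancl_into_trancl2)
    then show False using no_positive_cycle_imp_acyclic[OF w noc] unfolding P_def by blast
  qed
  moreover have "endf (ii h) \<in> S" using inV[OF h(1)] unfolding S_def by simp
  moreover have "w g \<le> 0" if g: "g \<in> dedges H ii" "endf g \<in> S" "endf (ii g) \<notin> S" for g
  proof (rule ccontr)
    assume "\<not> w g \<le> 0"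
    then have "(endf g, endf (ii g)) \<in> P" using g(1) unfolding P_def positive_adj_def by force
    moreover have "(endf (ii h), endf g) \<in> P\<^sup>*" using g(2) unfolding S_def by blast
    ultimately have "(endf (ii h), endf (ii g)) \<in> P\<^sup>*" by (rule rtrancl_into_rtrancl[rotated])
    then show False using g(3) inV[OF g(1)] unfolding S_def by blast
  qed
  moreover have "S \<subseteq> V" unfolding S_def by blast
  ultimately show ?thesis using weighting_le_bound_at_cut[OF G W L _ _ h(1)] by blast
qed

lemma abs_weight_le_bound:
  assumes G: "is_graph V H endf ii"
    and W: "is_weighting V H endf ii gen k w"
    and L: "\<forall>h\<in>H. is_leg ii h \<longrightarrow> w h = lv h"
    and noc: "\<not> (\<exists>c. positive_cycle H endf ii w c)"
    and g: "g \<in> H"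
  shows "\<bar>w g\<bar> \<le> leg_and_twist_bound V H endf ii gen k lv"
proof (cases "is_leg ii g")
  case True
  have "\<bar>lv g\<bar> \<le> (\<Sum>g\<in>{g\<in>H. is_leg ii g}. \<bar>lv g\<bar>)"
    using g True G unfolding is_graph_def by (intro member_le_sum) auto
  moreover have "0 \<le> (\<Sum>x\<in>V. \<bar>k * kappa H endf ii gen x\<bar>)" by (simp add: sum_nonneg)
  moreover have "w g = lv g" using L g True by simp
  ultimately show ?thesis unfolding leg_and_twist_bound_def by linarith
next
  case False
  then have gD: "g \<in> dedges H ii" and iD: "ii g \<in> dedges H ii" and e: "w (ii g) = - w g"
    using g G W unfolding dedges_def is_leg_def is_graph_def is_weighting_def
    by (auto simp: add_eq_0_iff2)
  show ?thesis
    using positive_weight_le_bound[OF G W L noc gD] positive_weight_le_bound[OF G W L noc iD] e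
      leg_and_twist_bound_nonneg[of V H endf ii gen k lv]
    by (cases "0 < w g"; cases "w g < 0") auto
qed

lemma finite_bounded_funs_supported_on:
  assumes "finite H"
  shows "finite {w :: 'h \<Rightarrow> int. (\<forall>g. g \<notin> H \<longrightarrow> w g = 0) \<and> (\<forall>g\<in>H. \<bar>w g\<bar> \<le> B)}"
  by (rule finite_subset[OF _ finite_set_of_finite_funs[OF assms finite_atLeastAtMost[of "-B" B], of 0]])
    (auto simp: abs_le_iff)

theorem lemma3p9:
  fixes V :: "'v set" and H :: "'h set" and endf :: "'h \<Rightarrow> 'v" and ii :: "'h \<Rightarrow> 'h"
    and gen :: "'v \<Rightarrow> nat" and k :: int and lv :: "'h \<Rightarrow> int"
  assumes "is_graph V H endf ii"
    and "connected_graph V H endf ii"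
    and "leg_weighted V H endf ii gen k lv"
  shows "finite {w \<in> weightings V H endf ii gen k lv. \<not> (\<exists>c. positive_cycle H endf ii w c)}"
proof -
  let ?B = "leg_and_twist_bound V H endf ii gen k lv"
  have "{w \<in> weightings V H endf ii gen k lv. \<not> (\<exists>c. positive_cycle H endf ii w c)}
     \<subseteq> {w. (\<forall>g. g \<notin> H \<longrightarrow> w g = 0) \<and> (\<forall>g\<in>H. \<bar>w g\<bar> \<le> ?B)}"
    using abs_weight_le_bound[OF assms(1)] unfolding weightings_def is_weighting_def by blast
  moreover have "finite H" using assms(1) unfolding is_graph_def by simp
  ultimately show ?thesis using finite_bounded_funs_supported_on finite_subset by blast
qed

end
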